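(* Fix a slice profile with finite slicing set $\mathcal U=\{u_i\}_{i=1}^m\subset\mathbb S^{d-1}$ and an iteration $t$. Suppose per-example gradients are $\ell_2$-clipped at threshold $C>0$, the minibatch size $B_t\ge1$ is deterministic, $K_t$ is a feasible discrepancy cap at iteration $t$, and the slice-wise Lipschitz condition holds at iteration $t$ with constants $L_{t,i}<\infty$. Then the vector $h_t=(h_{t,i})_{i=1}^m$ with \[ h_{t,i}:=\left(\frac{2K_tL_{t,i}C}{B_t}\right)^2 \] is a valid history-uniform cap (HUC) for $\mathcal U$ at iteration $t$.
   Context: Pufferfish scenario $(\mathcal S,\mathcal Q,\Theta)$: secrets, secret pairs $\mathcal Q\subseteq\mathcal S\times\mathcal S$, priors; each $\theta\in\Theta$ is a joint law of a secret $S$ and a dataset $X=(X_1,\dots,X_n)\in\bar{\mathcal X}^n$. For $\theta$ and $s$ with positive prior mass, $\mu^\theta_s$ is the conditional law of $X$ given $S=s$ under $\theta$; $\Pi(\mu,\nu)$ is the set of couplings. SGD setting: at iteration $t$, subsampling randomness $R_t\sim\mathbb P_{\eta,\rho}$ (independent of data and secret) selects an index (multi)set $\mathsf I_t(R_t)\subseteq[n]$ of size $B_t$. A history $y_{<t}$ contains the current parameter $\xi_{t-1}\in\mathbb R^d$. Per-example gradients $g_t(x_j)=\nabla_\xi\ell(\xi_{t-1};x_j)$ are clipped: $\tilde g_t(x_j)=g_t(x_j)\min\{1,C/\|g_t(x_j)\|_2\}$; $\bar g_t(x;r)=\frac1{B_t}\sum_{j\in\mathsf I_t(r)}\tilde g_t(x_j)$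 (with multiplicity). The pre-noise update is $f_t(x,y_{<t};r)=T_t(\bar g_t(x;r);y_{<t})$ for an update map $T_t:\mathbb R^d\times\mathcal Y_{<t}\to\mathbb R^d$. Discrepancy: $K_t(x,x';r)=\sum_{j\in\mathsf I_t(r)}\mathbf 1\{x_j\ne x'_j\}$. A number $K_t\le B_t$ is a feasible discrepancy cap at iteration $t$ if for all $\theta\in\Theta$, $(s_i,s_j)\in\mathcal Q$ and couplings $\gamma\in\Pi(\mu^\theta_{s_i},\mu^\theta_{s_j})$, $\operatorname{ess\,sup}_{((X,X'),R_t)\sim\gamma\times\mathbb P_{\eta,\rho}}K_t(X,X';R_t)\le K_t$. Slice-wise Lipschitz condition: for each $u_i\in\mathcal U$ there is $L_{t,i}<\infty$ with $|u_i^\top(T_t(z;y_{<t})-T_t(z';y_{<t}))|\le L_{t,i}|u_i^\top(z-z')|$ for all $z,z'\in\mathbb R^d$ and all histories $y_{<t}$ in the support. HUC: $h_t\in\mathbb R^m_+$ is a HUC for $\mathcal U$ at iteration $t$ if for all $\theta\in\Theta$, $(s_i,s_j)\in\mathcal Q$, histories $y_{<t}$ in the support and every coupling $\gamma\in\Pi(\mu^\theta_{s_i},\mu^\theta_{s_j})$, $\gamma\times\mathbb P_{\eta,\rho}$-almost surely in $((X,X'),R_t)$, $|\langle f_t(X,y_{<t};R_t)-f_t(X',y_{<t};R_t),u_i\rangle|\le\sqrt{h_{t,i}}$ for all $i\in[m]$. *)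

theory Defs
  imports "HOL-Probability.Probability" "HOL-Library.Multiset"
begin

definition dataset_space :: "nat \<Rightarrow> 'x measure \<Rightarrow> (nat \<Rightarrow> 'x) measure" where
  "dataset_space n Dx = PiM {..<n} (\<lambda>_. Dx)"

definition pos_mass :: "('s \<times> 'd) measure \<Rightarrow> 's \<Rightarrow> bool" where
  "pos_mass \<theta> s \<longleftrightarrow> {p \<in> space \<theta>. fst p = s} \<in> sets \<theta> \<and> emeasure \<theta> {p \<in> space \<theta>. fst p = s} > 0"

definition cond_law :: "('s \<times> 'd) measure \<Rightarrow> 'd measure \<Rightarrow> 's \<Rightarrow> 'd measure" where
  "cond_law \<theta> DS s = distr (uniform_measure \<theta> {p \<in> space \<theta>. fst p = s}) DS snd"

definition couplings :: "'d measure \<Rightarrow> 'd measure \<Rightarrow> ('d \<times> 'd) measure set" where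
  "couplings \<mu> \<nu> = {\<gamma>. sets \<gamma> = sets (\<mu> \<Otimes>\<^sub>M \<nu>) \<and> prob_space \<gamma> \<and>
      distr \<gamma> \<mu> fst = \<mu> \<and> distr \<gamma> \<nu> snd = \<nu>}"

definition discrepancy :: "('r \<Rightarrow> nat multiset) \<Rightarrow> (nat \<Rightarrow> 'x) \<Rightarrow> (nat \<Rightarrow> 'x) \<Rightarrow> 'r \<Rightarrow> nat" where
  "discrepancy I x x' r = sum_mset (image_mset (\<lambda>j. if x j \<noteq> x' j then 1 else 0) (I r))"

definition feasible_cap ::
  "('s \<times> (nat \<Rightarrow> 'x)) measure set \<Rightarrow> ('s \<times> 's) set \<Rightarrow> (nat \<Rightarrow> 'x) measure \<Rightarrow> 'r measure
   \<Rightarrow> ('r \<Rightarrow> nat multiset) \<Rightarrow> nat \<Rightarrow> real \<Rightarrow> bool" where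
  "feasible_cap \<Theta> Q DS P I B Kc \<longleftrightarrow> Kc \<le> real B \<and>
     (\<forall>\<theta>\<in>\<Theta>. \<forall>(si, sj)\<in>Q. pos_mass \<theta> si \<longrightarrow> pos_mass \<theta> sj \<longrightarrow>
        (\<forall>\<gamma>\<in>couplings (cond_law \<theta> DS si) (cond_law \<theta> DS sj).
           esssup (\<gamma> \<Otimes>\<^sub>M P) (\<lambda>((x, x'), r). ereal (real (discrepancy I x x' r))) \<le> ereal Kc))"

definition clip :: "real \<Rightarrow> 'v::real_normed_vector \<Rightarrow> 'v" where
  "clip C v = min 1 (C / norm v) *\<^sub>R v"

text \<open>Average clipped minibatch gradient (with multiplicity); grad xi x is the per-example
  gradient at parameter xi, par y the current parameter contained in history y.\<close>
definition avg_grad :: "('v \<Rightarrow> 'x \<Rightarrow> 'v::real_normed_vector) \<Rightarrow> ('y \<Rightarrow> 'v) \<Rightarrow> ('r \<Rightarrow> nat multiset)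
   \<Rightarrow> nat \<Rightarrow> real \<Rightarrow> (nat \<Rightarrow> 'x) \<Rightarrow> 'y \<Rightarrow> 'r \<Rightarrow> 'v" where
  "avg_grad grad par I B C x y r =
     (1 / real B) *\<^sub>R sum_mset (image_mset (\<lambda>j. clip C (grad (par y) (x j))) (I r))"

definition pre_update :: "('v \<Rightarrow> 'y \<Rightarrow> 'v) \<Rightarrow> ('v \<Rightarrow> 'x \<Rightarrow> 'v::real_normed_vector) \<Rightarrow> ('y \<Rightarrow> 'v)
   \<Rightarrow> ('r \<Rightarrow> nat multiset) \<Rightarrow> nat \<Rightarrow> real \<Rightarrow> (nat \<Rightarrow> 'x) \<Rightarrow> 'y \<Rightarrow> 'r \<Rightarrow> 'v" where
  "pre_update T grad par I B C x y r = T (avg_grad grad par I B C x y r) y"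

definition slice_lipschitz :: "(nat \<Rightarrow> 'v::real_inner) \<Rightarrow> nat \<Rightarrow> ('v \<Rightarrow> 'y \<Rightarrow> 'v) \<Rightarrow> 'y set
   \<Rightarrow> (nat \<Rightarrow> real) \<Rightarrow> bool" where
  "slice_lipschitz u m T Ysupp L \<longleftrightarrow>
     (\<forall>i\<in>{1..m}. \<forall>z z'. \<forall>y\<in>Ysupp. \<bar>u i \<bullet> (T z y - T z' y)\<bar> \<le> L i * \<bar>u i \<bullet> (z - z')\<bar>)"

definition is_HUC ::
  "('s \<times> (nat \<Rightarrow> 'x)) measure set \<Rightarrow> ('s \<times> 's) set \<Rightarrow> (nat \<Rightarrow> 'x) measure \<Rightarrow> 'r measure
   \<Rightarrow> 'y set \<Rightarrow> (nat \<Rightarrow> 'v::real_inner) \<Rightarrow> nat \<Rightarrow> ((nat \<Rightarrow> 'x) \<Rightarrow> 'y \<Rightarrow> 'r \<Rightarrow> 'v)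
   \<Rightarrow> (nat \<Rightarrow> real) \<Rightarrow> bool" where
  "is_HUC \<Theta> Q DS P Ysupp u m f h \<longleftrightarrow> (\<forall>i\<in>{1..m}. 0 \<le> h i) \<and>
     (\<forall>\<theta>\<in>\<Theta>. \<forall>(si, sj)\<in>Q. pos_mass \<theta> si \<longrightarrow> pos_mass \<theta> sj \<longrightarrow>
        (\<forall>y\<in>Ysupp. \<forall>\<gamma>\<in>couplings (cond_law \<theta> DS si) (cond_law \<theta> DS sj).
           (AE z in \<gamma> \<Otimes>\<^sub>M P. \<forall>i\<in>{1..m}.
              \<bar>(f (fst (fst z)) y (snd z) - f (snd (fst z)) y (snd z)) \<bullet> u i\<bar> \<le> sqrt (h i))))"

end

theory Submission
  imports Defs
begin

text \<open>Clipping caps each per-example gradient at norm C, so replacing one record moves the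
  minibatch sum by at most 2C; only the at most K_t replaced records of the batch contribute,
  giving a change of at most 2 K_t C / B_t in the averaged gradient. A unit slice u_i sees at
  most this change (Cauchy-Schwarz), and the slice-wise Lipschitz update map scales it by at most
  L_{t,i}. The bound on the discrepancy holds almost surely by the definition of the essential
  supremum, which is exactly the almost-sure quantifier in the definition of a HUC. Nothing
  else about the scenario is used: in particular the bound holds whatever grad is, and B = 0 is
  harmless because both sides then vanish.\<close>

lemma sum_mset_image_mset_diff:
  fixes f g :: "'a \<Rightarrow> 'v::ab_group_add"
  shows "(\<Sum>j\<in>#M. f j) - (\<Sum>j\<in>#M. g j) = (\<Sum>j\<in>#M. f j - g j)"
  by (induction M) (auto simp: algebra_simps)

lemma norm_sum_mset_le:
  fixes f :: "'a \<Rightarrow> 'v::real_normed_vector"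
  shows "norm (\<Sum>j\<in>#M. f j) \<le> (\<Sum>j\<in>#M. norm (f j))"
proof (induction M)
  case (add x M)
  then show ?case
    using norm_triangle_ineq[of "f x" "\<Sum>j\<in>#M. f j"] by simp
qed simp

lemma norm_clip_le:
  assumes "0 \<le> C"
  shows "norm (clip C v) \<le> C"
proof (cases "v = 0")
  case False
  then have "norm (clip C v) = min 1 (C / norm v) * norm v"
    using assms by (simp add: clip_def)
  also have "\<dots> \<le> C / norm v * norm v"
    by (intro mult_right_mono) auto
  finally show ?thesis
    using False by simp
qed (use assms in \<open>simp add: clip_def\<close>)

lemma norm_diff_clip_le:
  assumes "0 \<le> C"
  shows "norm (clip C v - clip C w) \<le> 2 * C"
  using norm_triangle_ineq4[of "clip C v" "clip C w"] norm_clip_le[OF assms, of v]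
    norm_clip_le[OF assms, of w]
  by simp

lemma norm_avg_grad_diff_le:
  assumes "0 \<le> C"
  shows "norm (avg_grad grad par I B C x y r - avg_grad grad par I B C x' y r)
    \<le> 2 * C * real (discrepancy I x x' r) / real B"
proof -
  let ?g = "\<lambda>x j. clip C (grad (par y) (x j))"
  have "norm (avg_grad grad par I B C x y r - avg_grad grad par I B C x' y r)
      = norm (\<Sum>j\<in>#I r. ?g x j - ?g x' j) / real B"
    unfolding avg_grad_def scaleR_diff_right[symmetric] sum_mset_image_mset_diff by simp
  also have "\<dots> \<le> (\<Sum>j\<in>#I r. if x j \<noteq> x' j then 2 * C else 0) / real B"
  proof (intro divide_right_mono order_trans[OF norm_sum_mset_le] sum_mset_mono)
    show "norm (?g x j - ?g x' j) \<le> (if x j \<noteq> x' j then 2 * C else 0)" for j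
      using norm_diff_clip_le[OF assms] by auto
  qed simp
  also have "\<dots> = 2 * C * real (discrepancy I x x' r) / real B"
    unfolding discrepancy_def of_nat_sum_mset sum_mset_distrib_left
    by (simp add: multiset.map_comp comp_def if_distrib cong: if_cong)
  finally show ?thesis .
qed

lemma slice_lipschitz_diff_le:
  assumes "slice_lipschitz u m T Ysupp L" "i \<in> {1..m}" "y \<in> Ysupp"
    and "norm (u i) \<le> 1" "norm (a - b) \<le> D"
  shows "\<bar>(T a y - T b y) \<bullet> u i\<bar> \<le> \<bar>L i\<bar> * D"
proof -
  have "\<bar>(T a y - T b y) \<bullet> u i\<bar> \<le> L i * \<bar>u i \<bullet> (a - b)\<bar>"
    using assms(1-3) by (simp add: slice_lipschitz_def inner_commute)
  also have "\<dots> \<le> \<bar>L i\<bar> * \<bar>u i \<bullet> (a - b)\<bar>"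
    by (intro mult_right_mono) auto
  also have "\<dots> \<le> \<bar>L i\<bar> * D"
  proof (intro mult_left_mono)
    have "\<bar>u i \<bullet> (a - b)\<bar> \<le> norm (u i) * norm (a - b)"
      by (rule Cauchy_Schwarz_ineq2)
    also have "\<dots> \<le> D"
      using assms(4,5) by (metis mult_left_le_one_le norm_ge_zero order.trans)
    finally show "\<bar>u i \<bullet> (a - b)\<bar> \<le> D" .
  qed simp
  finally show ?thesis .
qed

lemma pre_update_slice_diff_le:
  assumes "slice_lipschitz u m T Ysupp L" "i \<in> {1..m}" "y \<in> Ysupp" "norm (u i) \<le> 1"
    and "0 \<le> C" "real (discrepancy I x x' r) \<le> Kc"
  shows "\<bar>(pre_update T grad par I B C x y r - pre_update T grad par I B C x' y r) \<bullet> u i\<bar>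
    \<le> sqrt ((2 * Kc * L i * C / real B)\<^sup>2)"
proof -
  have "norm (avg_grad grad par I B C x y r - avg_grad grad par I B C x' y r)
      \<le> 2 * C * real (discrepancy I x x' r) / real B"
    using assms(5) by (rule norm_avg_grad_diff_le)
  also have "\<dots> \<le> 2 * C * Kc / real B"
    using assms(5,6) by (intro divide_right_mono mult_left_mono) auto
  finally have "\<bar>(pre_update T grad par I B C x y r - pre_update T grad par I B C x' y r) \<bullet> u i\<bar>
      \<le> \<bar>L i\<bar> * (2 * C * Kc / real B)"
    unfolding pre_update_def by (rule slice_lipschitz_diff_le[OF assms(1-4)])
  also have "\<dots> = sqrt ((2 * Kc * L i * C / real B)\<^sup>2)"
    using assms(5,6) by (simp add: abs_mult abs_divide)
  finally show ?thesis .
qed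

lemma AE_discrepancy_le_cap:
  fixes DS :: "(nat \<Rightarrow> 'x) measure" and P :: "'r measure"
  assumes "feasible_cap \<Theta> Q DS P I B Kc" "\<theta> \<in> \<Theta>" "(si, sj) \<in> Q"
    and "pos_mass \<theta> si" "pos_mass \<theta> sj" "\<gamma> \<in> couplings (cond_law \<theta> DS si) (cond_law \<theta> DS sj)"
  shows "AE z in \<gamma> \<Otimes>\<^sub>M P. real (discrepancy I (fst (fst z)) (snd (fst z)) (snd z)) \<le> Kc"
proof -
  define K :: "((nat \<Rightarrow> 'x) \<times> (nat \<Rightarrow> 'x)) \<times> 'r \<Rightarrow> ereal"
    where "K = (\<lambda>((x, x'), r). ereal (real (discrepancy I x x' r)))"
  have cap: "esssup (\<gamma> \<Otimes>\<^sub>M P) K \<le> ereal Kc"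
    using assms unfolding feasible_cap_def K_def by fast
  from esssup_AE[of K "\<gamma> \<Otimes>\<^sub>M P"] show ?thesis
  proof eventually_elim
    case (elim z)
    from elim cap have "K z \<le> ereal Kc"
      by (rule order_trans)
    then show ?case
      by (simp add: K_def split: prod.splits)
  qed
qed

theorem proposition2:
  fixes Ssp :: "'s measure" and Dx :: "'x measure" and n :: nat
    and \<Theta> :: "('s \<times> (nat \<Rightarrow> 'x)) measure set" and Q :: "('s \<times> 's) set"
    and P :: "'r measure" and I :: "'r \<Rightarrow> nat multiset" and B :: nat
    and Kc :: real and C :: real
    and loss :: "real^'d \<Rightarrow> 'x \<Rightarrow> real" and grad :: "real^'d \<Rightarrow> 'x \<Rightarrow> real^'d"
    and par :: "'y \<Rightarrow> real^'d" and T :: "real^'d \<Rightarrow> 'y \<Rightarrow> real^'d" and Ysupp :: "'y set"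
    and u :: "nat \<Rightarrow> real^'d" and m :: nat and L :: "nat \<Rightarrow> real"
  assumes priors: "\<forall>\<theta>\<in>\<Theta>. prob_space \<theta> \<and> sets \<theta> = sets (Ssp \<Otimes>\<^sub>M dataset_space n Dx)"
    and secret_pairs: "Q \<subseteq> space Ssp \<times> space Ssp"
    and subsampling: "prob_space P"
    and batch: "\<forall>r. size (I r) = B \<and> set_mset (I r) \<subseteq> {..<n}"
    and B_pos: "B \<ge> 1"
    and gradient: "\<forall>\<xi> x. ((\<lambda>\<zeta>. loss \<zeta> x) has_derivative (\<lambda>v. grad \<xi> x \<bullet> v)) (at \<xi>)"
    and C_pos: "C > 0"
    and slices: "\<forall>i\<in>{1..m}. norm (u i) = 1"
    and cap: "feasible_cap \<Theta> Q (dataset_space n Dx) P I B Kc"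
    and lip: "slice_lipschitz u m T Ysupp L"
  shows "is_HUC \<Theta> Q (dataset_space n Dx) P Ysupp u m (pre_update T grad par I B C)
           (\<lambda>i. (2 * Kc * L i * C / real B)\<^sup>2)"
  unfolding is_HUC_def
proof (intro conjI ballI impI; clarify?)
  fix \<theta> si sj y \<gamma>
  assume "\<theta> \<in> \<Theta>" "(si, sj) \<in> Q" "pos_mass \<theta> si" "pos_mass \<theta> sj"
    and "\<gamma> \<in> couplings (cond_law \<theta> (dataset_space n Dx) si) (cond_law \<theta> (dataset_space n Dx) sj)"
    and "y \<in> Ysupp"
  from cap this(1-5) have "AE z in \<gamma> \<Otimes>\<^sub>M P. real (discrepancy I (fst (fst z)) (snd (fst z)) (snd z)) \<le> Kc"
    by (rule AE_discrepancy_le_cap)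
  then show "AE z in \<gamma> \<Otimes>\<^sub>M P. \<forall>i\<in>{1..m}.
      \<bar>(pre_update T grad par I B C (fst (fst z)) y (snd z)
        - pre_update T grad par I B C (snd (fst z)) y (snd z)) \<bullet> u i\<bar>
      \<le> sqrt ((2 * Kc * L i * C / real B)\<^sup>2)"
    by eventually_elim
      (intro ballI pre_update_slice_diff_le[OF lip _ \<open>y \<in> Ysupp\<close>], use slices C_pos in auto)
qed simp

end
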